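(* Let $d$ and $t$ be integers with $d \geq 3t-5$ and $t \geq 4$. Then every edge-coloring of $W_d$ using at least $\left\lfloor \frac{2t-5}{t-2} d \right\rfloor + 1$ colors contains a rainbow subgraph isomorphic to $F_t$; that is, \[ \mathrm{rb}(W_d, F_t) \le \left\lfloor \frac{2t-5}{t-2}\, d \right\rfloor + 1 . \]
   Context: A subgraph of an edge-colored graph is rainbow if no two of its edges have the same color. For graphs $G$ and $H$, the rainbow number $\mathrm{rb}(G,H)$ is the minimum integer $k$ such that every edge-coloring of $G$ that uses at least $k$ distinct colors contains a rainbow subgraph isomorphic to $H$. $W_d$ is the wheel: a hub vertex adjacent to all vertices of a cycle $v_1\cdots v_dv_1$. The fan $F_t$ is obtained from a cycle $v_1v_2\cdots v_tv_1$ by adding all chords $v_1v_i$, $3 \le i \le t-1$. *)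

theory Defs
  imports Complex_Main
begin

definition wheel_vertices :: "nat \<Rightarrow> nat set" where
  "wheel_vertices d = {0..d}"

definition wheel_edges :: "nat \<Rightarrow> nat set set" where
  "wheel_edges d =
     {{0, i} | i. 1 \<le> i \<and> i \<le> d}
   \<union> {{i, i + 1} | i. 1 \<le> i \<and> i < d}
   \<union> {{d, 1}}"

definition fan_vertices :: "nat \<Rightarrow> nat set" where
  "fan_vertices t = {1..t}"

definition fan_edges :: "nat \<Rightarrow> nat set set" where
  "fan_edges t =
     {{i, i + 1} | i. 1 \<le> i \<and> i < t}
   \<union> {{t, 1}}
   \<union> {{1, i} | i. 3 \<le> i \<and> i \<le> t - 1}"

definition has_rainbow_copy ::
  "nat set set \<Rightarrow> (nat set \<Rightarrow> 'c) \<Rightarrow> nat set \<Rightarrow> nat set set \<Rightarrow> bool" where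
  "has_rainbow_copy E c HV HE \<longleftrightarrow>
     (\<exists>f :: nat \<Rightarrow> nat. inj_on f HV \<and> (\<forall>e\<in>HE. f ` e \<in> E) \<and>
        inj_on (\<lambda>e. c (f ` e)) HE)"

end

theory Submission
  imports Defs
begin

text \<open>Send the apex \<open>v\<^sub>1\<close> of \<open>F\<^sub>t\<close> to the hub of \<open>W\<^sub>d\<close> and \<open>v\<^sub>2, \<dots>, v\<^sub>t\<close> to consecutive rim
vertices: the image, a window of \<open>t - 1\<close> consecutive spokes and the \<open>t - 2\<close> rim edges between
them, is a copy of \<open>F\<^sub>t\<close>. There are \<open>d\<close> windows of \<open>2t - 3\<close> edges each, so without a rainbow
\<open>F\<^sub>t\<close> every window sees at most \<open>2t - 4\<close> of the \<open>k\<close> colours. A colour on \<open>a\<close> spokes lies in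
at least \<open>min d (a + t - 2)\<close> windows (for \<open>a = 0\<close> through one of its rim edges). If some colour
has \<open>a + t - 2 > d\<close>, the remaining \<open>2d - a\<close> edges carry at most \<open>d + t - 3\<close> further colours;
otherwise counting pairs (window, colour in it) gives \<open>d + (t - 2) k \<le> (2t - 4) d\<close>. Either way
\<open>(t - 2) k \<le> (2t - 5) d\<close>, using \<open>d \<ge> 3t - 5\<close> in the first case.\<close>

definition rim_vertex :: "nat \<Rightarrow> nat \<Rightarrow> nat" where
  "rim_vertex d i = i mod d + 1"

definition spoke :: "nat \<Rightarrow> nat \<Rightarrow> nat set" where
  "spoke d i = {0, rim_vertex d i}"

definition rim_edge :: "nat \<Rightarrow> nat \<Rightarrow> nat set" where
  "rim_edge d i = {rim_vertex d i, rim_vertex d (Suc i)}"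

definition fan_window :: "nat \<Rightarrow> nat \<Rightarrow> nat \<Rightarrow> nat set set" where
  "fan_window d t p =
     (\<lambda>j. spoke d (p + j)) ` {..<t - 1} \<union> (\<lambda>j. rim_edge d (p + j)) ` {..<t - 2}"

definition fan_embedding :: "nat \<Rightarrow> nat \<Rightarrow> nat \<Rightarrow> nat" where
  "fan_embedding d p j = (if j = 1 then 0 else rim_vertex d (p + j - 2))"

definition spokes_of_colour :: "nat \<Rightarrow> (nat set \<Rightarrow> 'c) \<Rightarrow> 'c \<Rightarrow> nat set" where
  "spokes_of_colour d c g = {i \<in> {..<d}. c (spoke d i) = g}"

lemma spoke_mod [simp]: "spoke d (i mod d) = spoke d i"
  by (simp add: spoke_def rim_vertex_def)

lemma rim_edge_mod [simp]: "rim_edge d (i mod d) = rim_edge d i"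
  by (simp add: rim_edge_def rim_vertex_def mod_Suc_eq)

lemma inj_on_spoke: "inj_on (spoke d) {..<d}"
  by (rule inj_onI) (auto simp: spoke_def rim_vertex_def doubleton_eq_iff)

lemma eq_if_mod_eq_in_interval:
  fixes a b d p :: nat
  assumes "a mod d = b mod d" "a \<in> {p..<p + d}" "b \<in> {p..<p + d}"
  shows "a = b"
proof -
  have eq: "x = y" if "x mod d = y mod d" "y \<le> x" "x < y + d" for x y :: nat
  proof -
    have "d dvd x - y" using that(1,2) by (simp add: mod_eq_dvd_iff_nat)
    moreover have "x - y < d" using that(2,3) by linarith
    ultimately have "x - y = 0" using dvd_imp_le by fastforce
    with that(2) show "x = y" by simp
  qed
  show ?thesis
  proof (cases "b \<le> a")
    case True
    with assms eq[of a b] show ?thesis by auto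
  next
    case False
    with assms eq[of b a] show ?thesis by auto
  qed
qed

lemma wheel_edges_eq:
  assumes "0 < d"
  shows "wheel_edges d = spoke d ` {..<d} \<union> rim_edge d ` {..<d}"
proof
  show "wheel_edges d \<subseteq> spoke d ` {..<d} \<union> rim_edge d ` {..<d}"
  proof
    fix e assume "e \<in> wheel_edges d"
    then consider (spoke) i where "e = {0, i}" "1 \<le> i" "i \<le> d"
      | (rim) i where "e = {i, i + 1}" "1 \<le> i" "i < d"
      | (closing) "e = {d, 1}"
      unfolding wheel_edges_def by blast
    then show "e \<in> spoke d ` {..<d} \<union> rim_edge d ` {..<d}"
    proof cases
      case spoke
      then have "e = spoke d (i - 1)" by (simp add: spoke_def rim_vertex_def)
      with spoke show ?thesis by auto
    next
      case rim
      then have "e = rim_edge d (i - 1)" by (simp add: rim_edge_def rim_vertex_def)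
      with rim show ?thesis by auto
    next
      case closing
      then have "e = rim_edge d (d - 1)" using assms by (simp add: rim_edge_def rim_vertex_def)
      with assms show ?thesis by auto
    qed
  qed
next
  have "spoke d i \<in> wheel_edges d" if "i < d" for i
    using that unfolding wheel_edges_def spoke_def rim_vertex_def by auto
  moreover have "rim_edge d i \<in> wheel_edges d" if "i < d" for i
  proof (cases "Suc i < d")
    case True
    then have "rim_edge d i = {i + 1, (i + 1) + 1}" by (simp add: rim_edge_def rim_vertex_def)
    with True show ?thesis unfolding wheel_edges_def by auto
  next
    case False
    with that have "Suc i = d" by simp
    then have "rim_edge d i = {d, 1}" by (auto simp: rim_edge_def rim_vertex_def)
    then show ?thesis unfolding wheel_edges_def by simp
  qed
  ultimately show "spoke d ` {..<d} \<union> rim_edge d ` {..<d} \<subseteq> wheel_edges d" by auto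
qed

lemma finite_wheel_edges: "0 < d \<Longrightarrow> finite (wheel_edges d)"
  by (simp add: wheel_edges_eq)

lemma card_wheel_edges_le: "0 < d \<Longrightarrow> card (wheel_edges d) \<le> 2 * d"
  using card_Un_le[of "spoke d ` {..<d}" "rim_edge d ` {..<d}"]
    card_image_le[of "{..<d}" "spoke d"] card_image_le[of "{..<d}" "rim_edge d"]
  by (simp add: wheel_edges_eq)

lemma spoke_in_wheel_edges: "0 < d \<Longrightarrow> spoke d i \<in> wheel_edges d"
  using spoke_mod[of d i] by (metis UnI1 imageI lessThan_iff mod_less_divisor wheel_edges_eq)

lemma rim_edge_in_wheel_edges: "0 < d \<Longrightarrow> rim_edge d i \<in> wheel_edges d"
  using rim_edge_mod[of d i] by (metis UnI2 imageI lessThan_iff mod_less_divisor wheel_edges_eq)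

lemma fan_window_subset_wheel_edges: "0 < d \<Longrightarrow> fan_window d t p \<subseteq> wheel_edges d"
  by (auto simp: fan_window_def spoke_in_wheel_edges rim_edge_in_wheel_edges)

lemma fan_edges_eq:
  assumes "2 \<le> t"
  shows "fan_edges t = (\<lambda>j. {1, j + 2}) ` {..<t - 1} \<union> (\<lambda>j. {j + 2, j + 3}) ` {..<t - 2}"
proof
  show "fan_edges t \<subseteq> (\<lambda>j. {1, j + 2}) ` {..<t - 1} \<union> (\<lambda>j. {j + 2, j + 3}) ` {..<t - 2}"
  proof
    fix e assume "e \<in> fan_edges t"
    then consider (path) i where "e = {i, i + 1}" "1 \<le> i" "i < t"
      | (closing) "e = {t, 1}"
      | (chord) i where "e = {1, i}" "3 \<le> i" "i \<le> t - 1"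
      unfolding fan_edges_def by blast
    then show "e \<in> (\<lambda>j. {1, j + 2}) ` {..<t - 1} \<union> (\<lambda>j. {j + 2, j + 3}) ` {..<t - 2}"
    proof cases
      case path
      show ?thesis
      proof (cases "i = 1")
        case True
        with path assms show ?thesis by (intro UnI1 rev_image_eqI[of 0]) auto
      next
        case False
        with path show ?thesis by (intro UnI2 rev_image_eqI[of "i - 2"]) auto
      qed
    next
      case closing
      with assms show ?thesis by (intro UnI1 rev_image_eqI[of "t - 2"]) auto
    next
      case chord
      then show ?thesis by (intro UnI1 rev_image_eqI[of "i - 2"]) auto
    qed
  qed
next
  have "{1, j + 2} \<in> fan_edges t" if j: "j < t - 1" for j
  proof -
    consider "j = 0" | "j + 2 = t" | "3 \<le> j + 2" "j + 2 \<le> t - 1" using j by linarith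
    then show ?thesis
    proof cases
      case 1
      with assms show ?thesis unfolding fan_edges_def by force
    next
      case 2
      then show ?thesis unfolding fan_edges_def by (auto simp: insert_commute)
    next
      case 3
      then show ?thesis unfolding fan_edges_def by blast
    qed
  qed
  moreover have "{j + 2, j + 3} \<in> fan_edges t" if "j < t - 2" for j
    unfolding fan_edges_def using that
    by (intro UnI1 CollectI exI[of _ "j + 2"]) auto
  ultimately show "(\<lambda>j. {1, j + 2}) ` {..<t - 1} \<union> (\<lambda>j. {j + 2, j + 3}) ` {..<t - 2}
    \<subseteq> fan_edges t" by auto
qed

lemma finite_fan_edges: "finite (fan_edges t)"
  unfolding fan_edges_def by auto

lemma card_fan_edges_le:
  assumes "2 \<le> t"
  shows "card (fan_edges t) \<le> 2 * t - 3"
proof -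
  have "card (fan_edges t)
      \<le> card ((\<lambda>j. {1, j + 2}) ` {..<t - 1}) + card ((\<lambda>j. {j + 2, j + 3}) ` {..<t - 2})"
    unfolding fan_edges_eq[OF assms] by (rule card_Un_le)
  also have "\<dots> \<le> (t - 1) + (t - 2)"
    by (intro add_mono card_image_le[THEN order_trans]) simp_all
  finally show ?thesis using assms by linarith
qed

lemma inj_on_fan_embedding:
  assumes "t \<le> d + 1"
  shows "inj_on (fan_embedding d p) (fan_vertices t)"
proof (rule inj_onI)
  fix x y assume x: "x \<in> fan_vertices t" and y: "y \<in> fan_vertices t"
    and eq: "fan_embedding d p x = fan_embedding d p y"
  show "x = y"
  proof (cases "x = 1 \<or> y = 1")
    case True
    with eq show ?thesis by (auto simp: fan_embedding_def rim_vertex_def split: if_splits)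
  next
    case False
    with eq have "(p + x - 2) mod d = (p + y - 2) mod d"
      by (simp add: fan_embedding_def rim_vertex_def)
    moreover have "p + x - 2 \<in> {p..<p + d}" "p + y - 2 \<in> {p..<p + d}"
      using x y False assms by (auto simp: fan_vertices_def)
    ultimately have "p + x - 2 = p + y - 2" by (rule eq_if_mod_eq_in_interval)
    with x y False show ?thesis by (auto simp: fan_vertices_def)
  qed
qed

lemma fan_embedding_image_fan_edges:
  assumes "2 \<le> t"
  shows "(\<lambda>e. fan_embedding d p ` e) ` fan_edges t = fan_window d t p"
proof -
  have "fan_embedding d p ` {1, j + 2} = spoke d (p + j)" for j
    by (simp add: fan_embedding_def spoke_def insert_commute)
  moreover have "fan_embedding d p ` {j + 2, j + 3} = rim_edge d (p + j)" for j
    by (simp add: fan_embedding_def rim_edge_def)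
  ultimately show ?thesis
    by (simp add: fan_edges_eq[OF assms] fan_window_def image_Un image_image)
qed

lemma rainbow_fan_if_colourful_window:
  assumes "2 \<le> t" "t \<le> d + 1" "2 * t - 3 \<le> card (c ` fan_window d t p)"
  shows "has_rainbow_copy (wheel_edges d) c (fan_vertices t) (fan_edges t)"
proof -
  let ?f = "fan_embedding d p"
  have image: "(\<lambda>e. ?f ` e) ` fan_edges t = fan_window d t p"
    using assms(1) by (rule fan_embedding_image_fan_edges)
  have "0 < d" using assms(1,2) by linarith
  have edges: "\<forall>e\<in>fan_edges t. ?f ` e \<in> wheel_edges d"
  proof
    fix e assume "e \<in> fan_edges t"
    then have "?f ` e \<in> fan_window d t p" by (subst image[symmetric]) (rule imageI)
    with fan_window_subset_wheel_edges[OF \<open>0 < d\<close>] show "?f ` e \<in> wheel_edges d" by blast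
  qed
  have colours: "(\<lambda>e. c (?f ` e)) ` fan_edges t = c ` fan_window d t p"
    by (simp add: image[symmetric] image_image)
  have "card (fan_edges t) \<le> card ((\<lambda>e. c (?f ` e)) ` fan_edges t)"
    using assms(3) card_fan_edges_le[OF assms(1)] unfolding colours by linarith
  then have "inj_on (\<lambda>e. c (?f ` e)) (fan_edges t)"
    using card_image_le[OF finite_fan_edges] inj_on_iff_eq_card[OF finite_fan_edges]
    by (metis le_antisym)
  with inj_on_fan_embedding[OF assms(2)] edges show ?thesis
    unfolding has_rainbow_copy_def by blast
qed

lemma ex_boundary_point_mod:
  fixes B :: "nat set"
  assumes "B \<subseteq> {..<d}" "B \<noteq> {}" "B \<noteq> {..<d}"
  shows "\<exists>p<d. p \<notin> B \<and> Suc p mod d \<in> B"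
proof (rule ccontr)
  assume no_boundary: "\<not> ?thesis"
  obtain p0 where p0: "p0 < d" "p0 \<notin> B" using assms(1,3) by blast
  have outside: "(p0 + n) mod d \<notin> B" for n
  proof (induction n)
    case 0
    with p0 show ?case by simp
  next
    case (Suc n)
    have "(p0 + n) mod d < d" using p0(1) by simp
    with no_boundary Suc have "Suc ((p0 + n) mod d) mod d \<notin> B" by blast
    then show ?case by (simp add: mod_Suc_eq)
  qed
  obtain b where b: "b \<in> B" using assms(2) by blast
  with assms(1) have "(p0 + (b + d - p0)) mod d = b" using p0(1) by auto
  with outside[of "b + d - p0"] b show False by simp
qed

lemma card_cyclic_sumset_interval_ge:
  fixes A :: "nat set"
  assumes A: "A \<subseteq> {..<d}" "A \<noteq> {}"
  shows "min d (card A + k) \<le> card {p \<in> {..<d}. \<exists>j\<le>k. (p + j) mod d \<in> A}"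
proof (induction k)
  case 0
  have "A \<subseteq> {p \<in> {..<d}. \<exists>j\<le>0. (p + j) mod d \<in> A}" using A by auto
  then have "card A \<le> card {p \<in> {..<d}. \<exists>j\<le>0. (p + j) mod d \<in> A}"
    by (intro card_mono) auto
  then show ?case by simp
next
  case (Suc k)
  define S where "S k = {p \<in> {..<d}. \<exists>j\<le>k. (p + j) mod d \<in> A}" for k
  have fin: "finite (S k)" for k unfolding S_def by auto
  have mono: "S k \<subseteq> S (Suc k)" unfolding S_def by (auto intro: le_SucI)
  show ?case
  proof (cases "S k = {..<d}")
    case True
    then have "d \<le> card (S (Suc k))" using card_mono[OF fin mono] by simp
    then show ?thesis unfolding S_def by simp
  next
    case False
    have "S k \<subseteq> {..<d}" "A \<subseteq> S k" using A unfolding S_def by force+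
    with A(2) False obtain p where p: "p < d" "p \<notin> S k" "Suc p mod d \<in> S k"
      using ex_boundary_point_mod[of "S k" d] by blast
    then obtain j where j: "j \<le> k" "(Suc p mod d + j) mod d \<in> A" unfolding S_def by blast
    have "(Suc p mod d + j) mod d = (p + Suc j) mod d" by (simp add: mod_add_left_eq)
    with j p(1) have "p \<in> S (Suc k)" unfolding S_def by fastforce
    with mono have "insert p (S k) \<subseteq> S (Suc k)" by blast
    then have "card (insert p (S k)) \<le> card (S (Suc k))" by (intro card_mono fin)
    with p(2) fin have "Suc (card (S k)) \<le> card (S (Suc k))" by simp
    with Suc.IH show ?thesis unfolding S_def by linarith
  qed
qed

lemma card_windows_containing_colour_ge:
  assumes "0 < d" "3 \<le> t" "g \<in> c ` wheel_edges d"
  shows "min d (card (spokes_of_colour d c g) + (t - 2))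
    \<le> card {p \<in> {..<d}. g \<in> c ` fan_window d t p}"
proof -
  let ?W = "{p \<in> {..<d}. g \<in> c ` fan_window d t p}"
  have windows: "card {p \<in> {..<d}. \<exists>j\<le>k. (p + j) mod d \<in> I} \<le> card ?W"
    if "\<And>j p. j \<le> k \<Longrightarrow> (p + j) mod d \<in> I \<Longrightarrow> g \<in> c ` fan_window d t p" for k I
    using that by (intro card_mono) auto
  show ?thesis
  proof (cases "spokes_of_colour d c g = {}")
    case False
    let ?A = "spokes_of_colour d c g"
    have in_window: "g \<in> c ` fan_window d t p" if "j \<le> t - 2" "(p + j) mod d \<in> ?A" for j p
    proof (rule rev_image_eqI)
      show "spoke d (p + j) \<in> fan_window d t p"
        using that(1) assms(2) unfolding fan_window_def by auto
      show "g = c (spoke d (p + j))"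
        using that(2) spoke_mod[of d "p + j"] by (simp add: spokes_of_colour_def)
    qed
    have "?A \<subseteq> {..<d}" by (auto simp: spokes_of_colour_def)
    moreover have "card {p \<in> {..<d}. \<exists>j\<le>t - 2. (p + j) mod d \<in> ?A} \<le> card ?W"
      using in_window by (rule windows)
    ultimately show ?thesis
      using card_cyclic_sumset_interval_ge[of ?A d "t - 2"] False by (meson order_trans)
  next
    case True
    obtain e where e: "e \<in> wheel_edges d" "c e = g" using assms(3) by blast
    with True obtain q where q: "q < d" "e = rim_edge d q"
      using wheel_edges_eq[OF assms(1)] by (auto simp: spokes_of_colour_def)
    have in_window: "g \<in> c ` fan_window d t p" if "j \<le> t - 3" "(p + j) mod d \<in> {q}" for j p
    proof (rule rev_image_eqI)
      show "rim_edge d (p + j) \<in> fan_window d t p"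
        using that(1) assms(2) unfolding fan_window_def by auto
      show "g = c (rim_edge d (p + j))"
        using that(2) rim_edge_mod[of d "p + j"] e q by simp
    qed
    have "card {p \<in> {..<d}. \<exists>j\<le>t - 3. (p + j) mod d \<in> {q}} \<le> card ?W"
      using in_window by (rule windows)
    then have "min d (1 + (t - 3)) \<le> card ?W"
      using card_cyclic_sumset_interval_ge[of "{q}" d "t - 3"] q(1) by simp
    with assms(2) True show ?thesis by simp
  qed
qed

lemma card_image_add_card_le:
  assumes "finite E" "X \<subseteq> E" "\<forall>x\<in>X. c x = g"
  shows "card (c ` E) + card X \<le> card E + 1"
proof -
  have "c ` E \<subseteq> insert g (c ` (E - X))" using assms(3) by blast
  then have "card (c ` E) \<le> card (insert g (c ` (E - X)))"
    using assms(1) by (intro card_mono) auto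
  also have "\<dots> \<le> Suc (card (c ` (E - X)))"
    using assms(1) by (simp add: card_insert_if)
  also have "card (c ` (E - X)) \<le> card (E - X)"
    using assms(1) by (intro card_image_le) simp
  finally have "card (c ` E) \<le> Suc (card (E - X))" by simp
  moreover have "card (E - X) + card X = card E"
    using assms(1,2) card_Diff_subset[of X E] card_mono[of E X] finite_subset[of X E] by simp
  ultimately show ?thesis by linarith
qed

lemma card_colours_add_spokes_of_colour_le:
  assumes "0 < d"
  shows "card (c ` wheel_edges d) + card (spokes_of_colour d c g) \<le> 2 * d + 1"
proof -
  let ?X = "spoke d ` spokes_of_colour d c g"
  have "card ?X = card (spokes_of_colour d c g)"
    by (rule card_image, rule inj_on_subset[OF inj_on_spoke]) (auto simp: spokes_of_colour_def)
  moreover have "?X \<subseteq> wheel_edges d"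
    using spoke_in_wheel_edges[OF assms] by blast
  moreover have "\<forall>x\<in>?X. c x = g" by (auto simp: spokes_of_colour_def)
  ultimately have "card (c ` wheel_edges d) + card (spokes_of_colour d c g) \<le> card (wheel_edges d) + 1"
    using card_image_add_card_le[OF finite_wheel_edges[OF assms]] by metis
  with card_wheel_edges_le[OF assms] show ?thesis by linarith
qed

lemma sum_card_colours_of_windows_ge:
  assumes "0 < d" "3 \<le> t"
    and "\<forall>g\<in>c ` wheel_edges d. card (spokes_of_colour d c g) + (t - 2) \<le> d"
  shows "d + (t - 2) * card (c ` wheel_edges d) \<le> (\<Sum>p<d. card (c ` fan_window d t p))"
proof -
  let ?K = "c ` wheel_edges d"
  have finK: "finite ?K" using finite_wheel_edges[OF assms(1)] by simp
  have "(\<Sum>g\<in>?K. card (spokes_of_colour d c g)) = d"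
    using sum.group[OF finite_lessThan finK, where g = "\<lambda>i. c (spoke d i)" and h = "\<lambda>_. 1::nat"]
      spoke_in_wheel_edges[OF assms(1)]
    by (auto simp: spokes_of_colour_def Collect_conj_eq)
  then have "d + (t - 2) * card ?K = (\<Sum>g\<in>?K. card (spokes_of_colour d c g) + (t - 2))"
    by (simp add: sum.distrib)
  also have "\<dots> \<le> (\<Sum>g\<in>?K. card {p \<in> {..<d}. g \<in> c ` fan_window d t p})"
  proof (rule sum_mono)
    fix g assume g: "g \<in> ?K"
    with assms(3) have "card (spokes_of_colour d c g) + (t - 2) \<le> d" by blast
    with card_windows_containing_colour_ge[OF assms(1,2) g]
    show "card (spokes_of_colour d c g) + (t - 2) \<le> card {p \<in> {..<d}. g \<in> c ` fan_window d t p}"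
      by (simp add: min.absorb2)
  qed
  also have "\<dots> = (\<Sum>p<d. card {g \<in> ?K. g \<in> c ` fan_window d t p})"
    using sum.swap_restrict[OF finite_lessThan finK, of "\<lambda>_ _. 1::nat"
      "\<lambda>p g. g \<in> c ` fan_window d t p"] by simp
  also have "\<dots> = (\<Sum>p<d. card (c ` fan_window d t p))"
  proof (rule sum.cong[OF refl])
    fix p
    have "c ` fan_window d t p \<subseteq> ?K"
      using fan_window_subset_wheel_edges[OF assms(1)] by (rule image_mono)
    then have "{g \<in> ?K. g \<in> c ` fan_window d t p} = c ` fan_window d t p" by blast
    then show "card {g \<in> ?K. g \<in> c ` fan_window d t p} = card (c ` fan_window d t p)" by simp
  qed
  finally show ?thesis .
qed

lemma fan_threshold_arith:
  fixes d t :: nat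
  assumes "4 \<le> t" "3 * t - 5 \<le> d"
  shows "(t - 2) * (d + t - 2) \<le> (2 * t - 5) * d"
proof -
  obtain s where t: "t = s + 4" using assms(1) by (metis add.commute le_iff_add)
  with assms(2) have "3 * s + 7 \<le> d" by simp
  then obtain e where "d = 3 * s + 7 + e" by (metis le_iff_add)
  then show ?thesis unfolding t by (simp add: algebra_simps)
qed

lemma colours_bound_without_colourful_window:
  assumes "4 \<le> t" "3 * t - 5 \<le> d"
    and no_colourful_window: "\<forall>p<d. card (c ` fan_window d t p) \<le> 2 * t - 4"
  shows "(t - 2) * card (c ` wheel_edges d) \<le> (2 * t - 5) * d"
proof -
  let ?k = "card (c ` wheel_edges d)"
  have d: "0 < d" using assms(1,2) by linarith
  show ?thesis
  proof (cases "\<exists>g\<in>c ` wheel_edges d. d < card (spokes_of_colour d c g) + (t - 2)")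
    case True
    then obtain g where "d < card (spokes_of_colour d c g) + (t - 2)" by blast
    with card_colours_add_spokes_of_colour_le[OF d, of c g] assms(1) have "?k \<le> d + t - 2"
      by linarith
    then have "(t - 2) * ?k \<le> (t - 2) * (d + t - 2)" by simp
    also have "\<dots> \<le> (2 * t - 5) * d" using assms(1,2) by (rule fan_threshold_arith)
    finally show ?thesis .
  next
    case False
    with d assms(1) have "d + (t - 2) * ?k \<le> (\<Sum>p<d. card (c ` fan_window d t p))"
      by (intro sum_card_colours_of_windows_ge) (auto simp: not_less)
    also have "\<dots> \<le> (\<Sum>p<d. 2 * t - 4)"
      using no_colourful_window by (intro sum_mono) simp
    also have "\<dots> = d + (2 * t - 5) * d" using assms(1) by (simp add: algebra_simps)
    finally show ?thesis by simp
  qed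
qed

lemma le_nat_floor_of_mult_le:
  fixes a b m n :: nat
  assumes "0 < b" "b * m \<le> a * n"
  shows "m \<le> nat \<lfloor>real a / real b * real n\<rfloor>"
proof -
  have "real b * real m \<le> real a * real n" using assms(2) by (metis of_nat_le_iff of_nat_mult)
  with assms(1) have "real m \<le> real a / real b * real n" by (simp add: field_simps)
  then have "int m \<le> \<lfloor>real a / real b * real n\<rfloor>" by (simp add: le_floor_iff)
  then show ?thesis by linarith
qed

theorem theorem3p1:
  fixes d t :: nat and c :: "nat set \<Rightarrow> 'c"
  assumes "t \<ge> 4" and "int d \<ge> 3 * int t - 5"
    and "card (c ` wheel_edges d) \<ge>
           nat \<lfloor>(real (2 * t - 5) / real (t - 2)) * real d\<rfloor> + 1"
  shows "has_rainbow_copy (wheel_edges d) c (fan_vertices t) (fan_edges t)"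
proof (rule ccontr)
  assume no_rainbow: "\<not> ?thesis"
  have d: "3 * t - 5 \<le> d" using assms(1,2) by linarith
  then have "t \<le> d + 1" using assms(1) by linarith
  have "\<forall>p<d. card (c ` fan_window d t p) \<le> 2 * t - 4"
  proof (intro allI impI)
    fix p
    have "\<not> 2 * t - 3 \<le> card (c ` fan_window d t p)"
      using rainbow_fan_if_colourful_window[of t d c p] no_rainbow assms(1) \<open>t \<le> d + 1\<close> by auto
    then show "card (c ` fan_window d t p) \<le> 2 * t - 4" by linarith
  qed
  with assms(1) d have "(t - 2) * card (c ` wheel_edges d) \<le> (2 * t - 5) * d"
    by (rule colours_bound_without_colourful_window)
  then have "card (c ` wheel_edges d) \<le> nat \<lfloor>real (2 * t - 5) / real (t - 2) * real d\<rfloor>"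
    using assms(1) by (intro le_nat_floor_of_mult_le) auto
  with assms(3) show False by linarith
qed

end
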